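(* For any positive integer $k$, in $\mathfrak{h}^1_t[[u]]$, $$S_t\left(\frac{1}{1-z_ku}\right)=\frac{1}{1-z_k(1-t)u}\ast S\left(\frac{1}{1-z_ktu}\right),$$ or equivalently, for all $n\ge1$, $$S_t(z_k^n)=\sum_{\substack{i+j=n\\ i,j\ge0}}(1-t)^it^j\,z_k^i\ast S(z_k^j).$$ In particular, if $k\ge2$, then for all $n\ge1$, $$\zeta^t(\{k\}^n)=\sum_{\substack{i+j=n\\ i,j\ge0}}(1-t)^it^j\zeta(\{k\}^i)\zeta^\star(\{k\}^j).$$
   Context: $t,u$ are commuting variables. $\mathfrak{h}_t=\mathbb{Q}[t]\langle x,y\rangle$ ($1$ = empty word), $\mathfrak{h}^1_t=\mathbb{Q}[t]+\mathfrak{h}_ty$, $z_k=x^{k-1}y$, $z_k^n$ is a concatenation power and $\frac1{1-Xu}=\sum_nX^nu^n$. For a parameter $s$, $\sigma_s$ is the algebra automorphism with $\sigma_s(x)=x,\sigma_s(y)=sx+y$ and $S_s$ is the linear map with $S_s(1)=1$, $S_s(wa)=\sigma_s(w)a$ for words $w$ and letters $a$; $S:=S_1$. The harmonic product $\ast$ on $\mathfrak{h}^1_t$ is the $\mathbb{Q}[t]$-bilinear product with $1\ast w=w\ast1=w$ and $z_kw_1\ast z_lw_2=z_k(w_1\ast z_lw_2)+z_l(z_kw_1\ast w_2)+z_{k+l}(w_1\ast w_2)$ for words $w_1,w_2\in\mathfrak{h}^1_t$; all maps and products extend coefficientwise to power series in $u$. $\{k\}^n$ is $n$ repetitions of $k$;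 values at the empty index are $1$. For $k_1\ge2$, $\zeta(k_1,\ldots,k_n)=\sum_{m_1>\cdots>m_n>0}\prod m_j^{-k_j}$, $\zeta^\star(k_1,\ldots,k_n)=\sum_{m_1\ge\cdots\ge m_n>0}\prod m_j^{-k_j}$, $\zeta^t(k_1,\ldots,k_n)=\sum_{\mathbf p}t^{n-\mathrm{dep}(\mathbf p)}\zeta(\mathbf p)$ over sequences $\mathbf p$ obtained from $(k_1,\ldots,k_n)$ by replacing each separating comma by a comma or a plus sign ($\mathrm{dep}$ = length). *)

theory Defs
  imports "HOL-Analysis.Analysis" "HOL-Computational_Algebra.Polynomial"
begin

datatype letter = LX | LY

text \<open>Elements of h_t are finitely supported functions from words to rat poly
  (the coefficient ring Q[t]); t is the polynomial variable.\<close>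

type_synonym elem = "letter list \<Rightarrow> rat poly"

definition tvar :: "rat poly" where "tvar = [:0, 1:]"

definition supp :: "elem \<Rightarrow> letter list set" where
  "supp f = {w. f w \<noteq> 0}"

definition wd :: "letter list \<Rightarrow> elem" where
  "wd w = (\<lambda>v. if v = w then 1 else 0)"

definition cmul :: "elem \<Rightarrow> elem \<Rightarrow> elem" where
  "cmul f g = (\<lambda>v. \<Sum>a\<in>supp f. \<Sum>b\<in>supp g. if a @ b = v then f a * g b else 0)"

definition lin :: "(letter list \<Rightarrow> elem) \<Rightarrow> elem \<Rightarrow> elem" where
  "lin L f = (\<lambda>v. \<Sum>w\<in>supp f. f w * L w v)"

fun sigma :: "rat poly \<Rightarrow> letter list \<Rightarrow> elem" where
  "sigma s [] = wd []"
| "sigma s (LX # w) = cmul (wd [LX]) (sigma s w)"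
| "sigma s (LY # w) = cmul (\<lambda>v. s * wd [LX] v + wd [LY] v) (sigma s w)"

definition Sw :: "rat poly \<Rightarrow> letter list \<Rightarrow> elem" where
  "Sw s w = (if w = [] then wd [] else cmul (sigma s (butlast w)) (wd [last w]))"

definition Smap :: "rat poly \<Rightarrow> elem \<Rightarrow> elem" where
  "Smap s f = lin (Sw s) f"

definition zk :: "nat \<Rightarrow> letter list" where
  "zk k = replicate (k - 1) LX @ [LY]"

definition zw :: "nat list \<Rightarrow> letter list" where
  "zw ks = concat (map zk ks)"

definition zpow :: "nat \<Rightarrow> nat \<Rightarrow> letter list" where
  "zpow k n = concat (replicate n (zk k))"

fun toidx_aux :: "nat \<Rightarrow> letter list \<Rightarrow> nat list" where
  "toidx_aux c [] = []"
| "toidx_aux c (LX # w) = toidx_aux (Suc c) w"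
| "toidx_aux c (LY # w) = Suc c # toidx_aux 0 w"

definition toidx :: "letter list \<Rightarrow> nat list" where
  "toidx w = toidx_aux 0 w"

text \<open>Harmonic (stuffle) product on index lists, as a list of terms with multiplicity.\<close>
fun stuffle :: "nat list \<Rightarrow> nat list \<Rightarrow> nat list list" where
  "stuffle [] l = [l]"
| "stuffle k [] = [k]"
| "stuffle (a # k) (b # l) =
     map ((#) a) (stuffle k (b # l)) @ map ((#) b) (stuffle (a # k) l)
     @ map ((#) (a + b)) (stuffle k l)"

definition harm_w :: "letter list \<Rightarrow> letter list \<Rightarrow> elem" where
  "harm_w a b = (\<lambda>v. \<Sum>m\<leftarrow>stuffle (toidx a) (toidx b). wd (zw m) v)"

text \<open>Harmonic product (meaningful on h^1_t, i.e. for elements supported on words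
  that are empty or end in y).\<close>
definition harm :: "elem \<Rightarrow> elem \<Rightarrow> elem" where
  "harm f g = (\<lambda>v. \<Sum>a\<in>supp f. \<Sum>b\<in>supp g. f a * g b * harm_w a b v)"

definition mzv :: "nat list \<Rightarrow> real" where
  "mzv ks = infsum (\<lambda>ms. \<Prod>j<length ks. 1 / real (ms ! j) ^ (ks ! j))
     {ms. length ms = length ks \<and> sorted_wrt (>) ms \<and> (\<forall>m\<in>set ms. 0 < m)}"

definition mzsv :: "nat list \<Rightarrow> real" where
  "mzsv ks = infsum (\<lambda>ms. \<Prod>j<length ks. 1 / real (ms ! j) ^ (ks ! j))
     {ms. length ms = length ks \<and> sorted_wrt (\<ge>) ms \<and> (\<forall>m\<in>set ms. 0 < m)}"

text \<open>Sequences obtained by replacing each comma by a comma or a plus sign.\<close>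
fun merges :: "nat list \<Rightarrow> nat list list" where
  "merges [] = [[]]"
| "merges [a] = [[a]]"
| "merges (a # b # r) = map ((#) a) (merges (b # r)) @ merges ((a + b) # r)"

definition mzv_t :: "nat list \<Rightarrow> real poly" where
  "mzv_t ks = (\<Sum>p\<leftarrow>merges ks. monom (mzv p) (length ks - length p))"

end

(*
  Write the words z_(k_1) ... z_(k_r) of h^1 as index lists (k_1, ..., k_r). Then S_s(z_k^n) is the
  sum of s^c z_q over the indices q obtained from (k, ..., k) by replacing c of its n - 1 commas by
  plus signs, and z_k^i * S(z_k^j) is the sum of all stuffles of (k, ..., k) (i entries) with the
  indices obtained in this way for j. An index p with r entries, all positive multiples of k and
  of total weight nk, occurs once in S_t(z_k^n), with coefficient t^(n-r), and (r choose i) times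
  in z_k^i * S(z_k^(n-i)): the i entries of p that absorb an entry of the left factor can be
  chosen freely, and then the rest is determined. So the identity reduces to the binomial theorem
  sum_i (r choose i) (1 - t)^i t^(n-i) = t^(n-r).

  The same counting applies to sums truncated to summation indices below M, which satisfy the
  harmonic product and the expansion of zeta-star over merged indices exactly; for k >= 2 they
  converge to the multiple zeta (star) values.
*)
theory Submission
  imports Defs
begin

section \<open>Merging and stuffling index lists\<close>

lemma merges_Cons_replicate:
  "merges (a # replicate m k) =
     concat (map (\<lambda>l. map ((#) (a + l * k)) (merges (replicate (m - l) k))) [0..<Suc m])"
proof (induction m arbitrary: a)
  case 0
  then show ?case by simp
next
  case (Suc m)
  have "[0..<Suc (Suc m)] = 0 # map Suc [0..<Suc m]"
    by (simp add: map_Suc_upt upt_conv_Cons del: upt_Suc)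
  then show ?case
    by (simp add: Suc.IH[of "a + k"] add.assoc comp_def del: upt_Suc)
qed

lemma sum_list_map_concat: "(\<Sum>x\<leftarrow>concat xss. f x) = (\<Sum>xs\<leftarrow>xss. \<Sum>x\<leftarrow>xs. f x)"
  by (induction xss) auto

lemma sum_list_merges_replicate_Suc:
  "(\<Sum>q\<leftarrow>merges (replicate (Suc m) k). F q) =
   (\<Sum>l<Suc m. \<Sum>y\<leftarrow>merges (replicate (m - l) k). F (Suc l * k # y))"
  by (simp add: merges_Cons_replicate sum_list_map_concat interv_sum_list_conv_sum_set_nat
      atLeast0LessThan comp_def del: upt_Suc)

definition add_hd :: "nat \<Rightarrow> nat list \<Rightarrow> nat list" where
  "add_hd b l = (case l of [] \<Rightarrow> [] | x # l' \<Rightarrow> (x + b) # l')"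

lemma merges_Cons_add: "merges ((a + b) # r) = map (add_hd b) (merges (a # r))"
proof (induction r arbitrary: a)
  case Nil
  then show ?case by (simp add: add_hd_def)
next
  case (Cons c r)
  have "merges ((a + c + b) # r) = map (add_hd b) (merges ((a + c) # r))" by (rule Cons.IH)
  then show ?case by (simp add: add_hd_def comp_def add.commute add.left_commute)
qed

lemma Nil_in_merges_iff: "[] \<in> set (merges l) \<longleftrightarrow> l = []"
  by (induction l rule: merges.induct) auto

lemma stuffle_Nil2 [simp]: "stuffle xs [] = [xs]"
  by (cases xs) auto

lemma Nil_in_stuffle_iff: "[] \<in> set (stuffle a b) \<longleftrightarrow> a = [] \<and> b = []"
  by (induction a b rule: stuffle.induct) auto

section \<open>Counting the terms of \<open>z\<^sub>k\<^sup>i \<ast> S(z\<^sub>k\<^sup>j)\<close>\<close>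

text \<open>In index notation, the terms of the harmonic product \<open>z\<^sub>k\<^sup>i \<ast> S(z\<^sub>k\<^sup>j)\<close>, with multiplicity.\<close>
definition stuffle_merges :: "nat \<Rightarrow> nat \<Rightarrow> nat \<Rightarrow> nat list list" where
  "stuffle_merges k i j = concat (map (stuffle (replicate i k)) (merges (replicate j k)))"

lemma stuffle_merges_0: "stuffle_merges k 0 j = merges (replicate j k)"
proof -
  have "concat (map (stuffle []) L) = L" for L
    by (induction L) auto
  then show ?thesis by (simp add: stuffle_merges_def)
qed

lemma count_stuffle_merges:
  "count_list (stuffle_merges k i j) p =
     (\<Sum>q\<leftarrow>merges (replicate j k). count_list (stuffle (replicate i k) q) p)"
  by (simp add: stuffle_merges_def count_list_concat comp_def)

lemma count_list_map_Cons:
  "count_list (map ((#) a) L) (h # p) = (if h = a then count_list L p else 0)"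
  by (induction L) auto

lemma count_stuffle_replicate_Cons:
  "count_list (stuffle (replicate i k) (c # y)) (h # p) =
     (if 0 < i \<and> h = k then count_list (stuffle (replicate (i - 1) k) (c # y)) p else 0)
   + (if h = c then count_list (stuffle (replicate i k) y) p else 0)
   + (if 0 < i \<and> h = k + c then count_list (stuffle (replicate (i - 1) k) y) p else 0)"
  by (cases i) (auto simp: count_list_map_Cons)

lemma count_stuffle_merges_Nil:
  "count_list (stuffle_merges k i j) [] = (if i = 0 \<and> j = 0 then 1 else 0)"
  by (cases j) (auto simp: count_stuffle_merges Nil_in_merges_iff Nil_in_stuffle_iff
      intro!: sum_list_0 count_notin)

lemma sum_list_if_const:
  "(\<Sum>x\<leftarrow>xs. if P then f x else 0) = (if P then (\<Sum>x\<leftarrow>xs. f x) else 0)"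
  by simp

lemma count_stuffle_merges_Cons:
  "count_list (stuffle_merges k i j) (h # p) =
     (if 0 < i \<and> h = k then count_list (stuffle_merges k (i - 1) j) p else 0)
   + (\<Sum>l<j. if h = Suc l * k then count_list (stuffle_merges k i (j - Suc l)) p else 0)
   + (if 0 < i then \<Sum>l<j. if h = k + Suc l * k
                              then count_list (stuffle_merges k (i - 1) (j - Suc l)) p else 0
      else 0)"
  (is "_ = ?R")
proof (cases j)
  case 0
  then show ?thesis by (cases i) (auto simp: stuffle_merges_def)
next
  case (Suc m)
  let ?N = "\<lambda>i q. count_list (stuffle (replicate i k) q) p"
  have "count_list (stuffle_merges k i j) (h # p) =
     (\<Sum>l<Suc m. \<Sum>y\<leftarrow>merges (replicate (m - l) k).
        count_list (stuffle (replicate i k) (Suc l * k # y)) (h # p))"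
    by (simp only: Suc count_stuffle_merges sum_list_merges_replicate_Suc)
  also have "\<dots> =
       (\<Sum>l<Suc m. \<Sum>y\<leftarrow>merges (replicate (m - l) k).
          if 0 < i \<and> h = k then ?N (i - 1) (Suc l * k # y) else 0)
     + (\<Sum>l<Suc m. \<Sum>y\<leftarrow>merges (replicate (m - l) k). if h = Suc l * k then ?N i y else 0)
     + (\<Sum>l<Suc m. \<Sum>y\<leftarrow>merges (replicate (m - l) k).
          if 0 < i \<and> h = k + Suc l * k then ?N (i - 1) y else 0)"
    by (simp only: count_stuffle_replicate_Cons sum_list_addf sum.distrib)
  also have "\<dots> = ?R"
    unfolding Suc sum_list_if_const count_stuffle_merges sum_list_merges_replicate_Suc
    by (simp del: sum.lessThan_Suc cong: if_cong)
  finally show ?thesis .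
qed

definition pos_multiples :: "nat \<Rightarrow> nat list \<Rightarrow> bool" where
  "pos_multiples k p \<longleftrightarrow> (\<forall>x\<in>set p. 0 < x \<and> k dvd x)"

lemma length_le_sum_list_div:
  "pos_multiples k p \<Longrightarrow> length p \<le> (\<Sum>x\<leftarrow>p. x div k)"
proof (induction p)
  case (Cons a p)
  then have "0 < a" "k dvd a" "pos_multiples k p" by (auto simp: pos_multiples_def)
  then have "1 \<le> a div k" by (auto elim!: dvdE)
  with Cons.IH \<open>pos_multiples k p\<close> show ?case by simp
qed simp

lemma sum_lessThan_if_eq_Suc:
  "(\<Sum>l<j. if c = Suc l then X l else 0) = (if 1 \<le> c \<and> c \<le> j then X (c - 1) else 0)"
  by (cases c) (auto simp: sum.delta)

lemma sum_lessThan_if_eq_Suc_Suc: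
  "(\<Sum>l<j. if c = Suc (Suc l) then X l else 0) = (if 2 \<le> c \<and> c \<le> j + 1 then X (c - 2) else 0)"
proof (cases c)
  case (Suc c')
  then show ?thesis by (cases c') (auto simp: sum.delta)
qed simp

text \<open>Pascal's rule, split according to whether the first entry of a term of
  \<open>z\<^sub>k\<^sup>i \<ast> S(z\<^sub>k\<^sup>j)\<close> comes from the left factor, the right factor, or both.\<close>
lemma binomial_Suc_three_cases:
  fixes c r \<sigma> i j :: nat
  defines "B \<equiv> \<lambda>a b. if \<sigma> = a + b then r choose a else 0"
  assumes "1 \<le> c" and "r \<le> \<sigma>"
  shows "(if 0 < i \<and> c = 1 then B (i - 1) j else 0) + (if c \<le> j then B i (j - c) else 0)
       + (if 0 < i \<and> 2 \<le> c \<and> c \<le> j + 1 then B (i - 1) (j + 1 - c) else 0)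
       = (if c + \<sigma> = i + j then Suc r choose i else 0)"
proof (cases i)
  case (Suc i')
  consider "c = 1" | "2 \<le> c \<and> c \<le> j" | "c = j + 1" | "j + 1 < c"
    using assms(2) by linarith
  then show ?thesis
    by cases (use Suc assms in \<open>auto simp: binomial_eq_0\<close>)
qed (use assms in auto)

lemma count_stuffle_merges_Cons_multiple:
  assumes k: "0 < k" and c: "1 \<le> c"
  shows "count_list (stuffle_merges k i j) (c * k # p) =
         (if 0 < i \<and> c = 1 then count_list (stuffle_merges k (i - 1) j) p else 0)
       + (if c \<le> j then count_list (stuffle_merges k i (j - c)) p else 0)
       + (if 0 < i \<and> 2 \<le> c \<and> c \<le> j + 1
          then count_list (stuffle_merges k (i - 1) (j + 1 - c)) p else 0)"
proof -
  have multiple_iff: "(c * k = Suc l * k) = (c = Suc l)" for l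
    using k by (simp only: mult_cancel2) simp
  have multiple_iff_Suc: "(c * k = k + Suc l * k) = (c = Suc (Suc l))" for l
    using multiple_iff[of "Suc l"] by simp
  have multiple_iff_0: "(c * k = k) = (c = 1)"
    using multiple_iff[of 0] by simp
  show ?thesis
    unfolding count_stuffle_merges_Cons multiple_iff_0 multiple_iff multiple_iff_Suc
      sum_lessThan_if_eq_Suc sum_lessThan_if_eq_Suc_Suc
    using c by (intro arg_cong2[where f = "(+)"]) (auto simp: Suc_diff_le)
qed

lemma count_stuffle_merges_eq:
  assumes k: "0 < k"
  shows "count_list (stuffle_merges k i j) p =
    (if pos_multiples k p \<and> (\<Sum>x\<leftarrow>p. x div k) = i + j then length p choose i else 0)"
proof (induction p arbitrary: i j)
  case Nil
  then show ?case by (simp add: count_stuffle_merges_Nil pos_multiples_def)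
next
  case (Cons h p)
  show ?case
  proof (cases "0 < h \<and> k dvd h")
    case False
    then have "h \<noteq> k" "\<And>l. h \<noteq> Suc l * k" "\<And>l. h \<noteq> k + Suc l * k"
      using k by auto
    moreover have "\<not> pos_multiples k (h # p)"
      using False by (auto simp: pos_multiples_def)
    ultimately show ?thesis by (simp add: count_stuffle_merges_Cons)
  next
    case True
    then obtain c where h: "h = c * k" and c: "1 \<le> c"
      by (auto elim!: dvdE simp: mult.commute)
    have "count_list (stuffle_merges k i j) (h # p) =
          (if pos_multiples k p \<and> c + (\<Sum>x\<leftarrow>p. x div k) = i + j then Suc (length p) choose i else 0)"
    proof (cases "pos_multiples k p")
      case True
      then show ?thesis
        using binomial_Suc_three_cases[OF c length_le_sum_list_div[OF True], of i j]
        by (simp only: h count_stuffle_merges_Cons_multiple[OF k c] Cons.IH simp_thms)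
    qed (simp add: h count_stuffle_merges_Cons_multiple[OF k c] Cons.IH)
    then show ?thesis
      using True h k by (auto simp: pos_multiples_def)
  qed
qed

lemma count_merges_replicate:
  assumes "0 < k"
  shows "count_list (merges (replicate j k)) p =
    (if pos_multiples k p \<and> (\<Sum>x\<leftarrow>p. x div k) = j then 1 else 0)"
  using count_stuffle_merges_eq[OF assms, of 0 j p] by (simp add: stuffle_merges_0)

lemma set_merges_replicate:
  assumes "0 < k" and "q \<in> set (merges (replicate j k))"
  shows "pos_multiples k q" and "(\<Sum>x\<leftarrow>q. x div k) = j"
  using count_merges_replicate[OF assms(1), of j q] assms(2)
  by (simp_all add: count_list_0_iff split: if_splits)

lemma sum_binomial_one_minus:
  fixes t :: "'a::comm_ring_1"
  assumes "r \<le> n"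
  shows "(\<Sum>i\<le>n. (1 - t) ^ i * t ^ (n - i) * of_nat (r choose i)) = t ^ (n - r)"
proof -
  have "(\<Sum>i\<le>n. (1 - t) ^ i * t ^ (n - i) * of_nat (r choose i)) =
        (\<Sum>i\<le>r. t ^ (n - r) * (of_nat (r choose i) * (1 - t) ^ i * t ^ (r - i)))"
  proof (rule sum.mono_neutral_cong_right)
    show "(1 - t) ^ i * t ^ (n - i) * of_nat (r choose i) =
          t ^ (n - r) * (of_nat (r choose i) * (1 - t) ^ i * t ^ (r - i))" if "i \<in> {..r}" for i
    proof -
      have "n - i = (n - r) + (r - i)" using that assms by auto
      then show ?thesis by (simp add: power_add mult_ac)
    qed
  qed (use assms in \<open>auto simp: binomial_eq_0\<close>)
  also have "\<dots> = t ^ (n - r) * ((1 - t) + t) ^ r"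
    unfolding binomial_ring by (simp add: sum_distrib_left)
  finally show ?thesis by simp
qed

lemma sum_list_eq_sum_count_list:
  fixes g :: "'b \<Rightarrow> 'a::comm_semiring_1"
  assumes "finite P" and "set L \<subseteq> P"
  shows "(\<Sum>m\<leftarrow>L. g m) = (\<Sum>p\<in>P. of_nat (count_list L p) * g p)"
  using assms(2)
proof (induction L)
  case (Cons q L)
  then have "(\<Sum>p\<in>P. of_nat (count_list (q # L) p) * g p) =
        (\<Sum>p\<in>P. if q = p then g p else 0) + (\<Sum>p\<in>P. of_nat (count_list L p) * g p)"
    by (auto simp add: sum.distrib[symmetric] distrib_right intro!: sum.cong)
  with Cons assms(1) show ?case by (simp add: sum.delta)
qed simp

lemma sum_binomial_count_stuffle_merges:
  fixes t :: "'a::comm_ring_1"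
  assumes k: "0 < k"
  shows "(\<Sum>i\<le>n. (1 - t) ^ i * t ^ (n - i) * of_nat (count_list (stuffle_merges k i (n - i)) p)) =
         of_nat (count_list (merges (replicate n k)) p) * t ^ (n - length p)"
proof -
  let ?C = "pos_multiples k p \<and> (\<Sum>x\<leftarrow>p. x div k) = n"
  have "(\<Sum>i\<le>n. (1 - t) ^ i * t ^ (n - i) * of_nat (count_list (stuffle_merges k i (n - i)) p)) =
        (\<Sum>i\<le>n. (1 - t) ^ i * t ^ (n - i) * of_nat (if ?C then length p choose i else 0))"
    by (rule sum.cong) (simp_all add: count_stuffle_merges_eq[OF k])
  also have "\<dots> = of_nat (count_list (merges (replicate n k)) p) * t ^ (n - length p)"
  proof (cases ?C)
    case True
    then have "length p \<le> n" using length_le_sum_list_div by blast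
    with True show ?thesis
      by (simp add: count_merges_replicate[OF k] sum_binomial_one_minus)
  next
    case False
    then show ?thesis by (simp only: count_merges_replicate[OF k] if_not_P) simp
  qed
  finally show ?thesis .
qed

lemma sum_merges_replicate_eq_stuffle_merges:
  fixes t :: "'a::comm_ring_1" and g :: "nat list \<Rightarrow> 'a"
  assumes k: "0 < k"
  shows "(\<Sum>q\<leftarrow>merges (replicate n k). t ^ (n - length q) * g q) =
         (\<Sum>i\<le>n. (1 - t) ^ i * t ^ (n - i) * (\<Sum>m\<leftarrow>stuffle_merges k i (n - i). g m))"
proof -
  define P where "P = (\<Union>i\<le>n. set (stuffle_merges k i (n - i)))"
  have P: "finite P" "\<And>i. i \<le> n \<Longrightarrow> set (stuffle_merges k i (n - i)) \<subseteq> P"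
    unfolding P_def by auto
  have "(\<Sum>q\<leftarrow>merges (replicate n k). t ^ (n - length q) * g q) =
        (\<Sum>p\<in>P. of_nat (count_list (merges (replicate n k)) p) * t ^ (n - length p) * g p)"
    using P P(2)[of 0] by (subst sum_list_eq_sum_count_list) (simp_all add: stuffle_merges_0 mult.assoc)
  also have "\<dots> = (\<Sum>p\<in>P. \<Sum>i\<le>n. (1 - t) ^ i * t ^ (n - i) *
                                  of_nat (count_list (stuffle_merges k i (n - i)) p) * g p)"
    by (simp add: sum_binomial_count_stuffle_merges[OF k, symmetric] sum_distrib_right)
  also have "\<dots> = (\<Sum>i\<le>n. (1 - t) ^ i * t ^ (n - i) *
                   (\<Sum>p\<in>P. of_nat (count_list (stuffle_merges k i (n - i)) p) * g p))"
    by (simp add: sum_distrib_left sum.swap[of _ P] mult_ac)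
  also have "\<dots> = (\<Sum>i\<le>n. (1 - t) ^ i * t ^ (n - i) * (\<Sum>m\<leftarrow>stuffle_merges k i (n - i). g m))"
    using P by (intro sum.cong refl) (simp add: sum_list_eq_sum_count_list)
  finally show ?thesis .
qed

section \<open>The maps \<open>S\<^sub>s\<close> and the harmonic product on powers of \<open>z\<^sub>k\<close>\<close>

definition lincomb :: "(rat poly \<times> letter list) list \<Rightarrow> elem" where
  "lincomb R = (\<lambda>v. \<Sum>(c, w)\<leftarrow>R. if w = v then c else 0)"

definition lc_eval :: "(rat poly \<times> letter list) list \<Rightarrow> (letter list \<Rightarrow> rat poly) \<Rightarrow> rat poly" where
  "lc_eval R G = (\<Sum>(c, w)\<leftarrow>R. c * G w)"

lemma lc_eval_Nil [simp]: "lc_eval [] G = 0"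
  and lc_eval_Cons [simp]: "lc_eval ((c, w) # R) G = c * G w + lc_eval R G"
  and lc_eval_append [simp]: "lc_eval (R1 @ R2) G = lc_eval R1 G + lc_eval R2 G"
  by (simp_all add: lc_eval_def)

lemma lc_eval_map_word [simp]: "lc_eval (map (\<lambda>(c, u). (c, f u)) R) G = lc_eval R (\<lambda>u. G (f u))"
  by (induction R) auto

lemma lc_eval_map_scaled [simp]:
  "lc_eval (map (\<lambda>(c, u). (a * c, f u)) R) G = a * lc_eval R (\<lambda>u. G (f u))"
  by (induction R) (auto simp: algebra_simps)

lemma lincomb_apply: "lincomb R v = lc_eval R (\<lambda>w. if w = v then 1 else 0)"
  by (simp add: lincomb_def lc_eval_def if_distrib cong: if_cong)

lemma wd_eq_lincomb: "wd w = lincomb [(1, w)]"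
  by (auto simp: wd_def lincomb_def)

lemma supp_lincomb: "supp (lincomb R) \<subseteq> snd ` set R"
proof -
  have "lincomb R w = 0" if "w \<notin> snd ` set R" for w
    using that by (induction R) (auto simp: lincomb_def)
  then show ?thesis unfolding supp_def by blast
qed

lemma sum_supp_lincomb: "(\<Sum>a\<in>supp (lincomb R). lincomb R a * F a) = lc_eval R F"
proof -
  have "(\<Sum>a\<in>A. lincomb R a * F a) = lc_eval R F" if "finite A" "snd ` set R \<subseteq> A" for A
    using that(2)
  proof (induction R)
    case (Cons x R)
    obtain c w where x: "x = (c, w)" by force
    have "(\<Sum>a\<in>A. lincomb (x # R) a * F a) =
          (\<Sum>a\<in>A. if w = a then c * F a else 0) + (\<Sum>a\<in>A. lincomb R a * F a)"
      unfolding x by (auto simp: lincomb_def sum.distrib[symmetric] distrib_right intro!: sum.cong)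
    with Cons x \<open>finite A\<close> show ?case by (simp add: sum.delta)
  qed (simp add: lincomb_def)
  moreover have "(\<Sum>a\<in>supp (lincomb R). lincomb R a * F a) = (\<Sum>a\<in>snd ` set R. lincomb R a * F a)"
    using supp_lincomb by (intro sum.mono_neutral_left) (auto simp: supp_def)
  ultimately show ?thesis by simp
qed

lemma lin_lincomb: "lin L (lincomb R) v = lc_eval R (\<lambda>w. L w v)"
  unfolding lin_def by (rule sum_supp_lincomb)

lemma cmul_lincomb:
  "cmul (lincomb R1) (lincomb R2) v = lc_eval R1 (\<lambda>a. lc_eval R2 (\<lambda>b. if a @ b = v then 1 else 0))"
proof -
  have "cmul (lincomb R1) (lincomb R2) v = (\<Sum>a\<in>supp (lincomb R1). lincomb R1 a *
          (\<Sum>b\<in>supp (lincomb R2). lincomb R2 b * (if a @ b = v then 1 else 0)))"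
    unfolding cmul_def by (auto simp: sum_distrib_left intro!: sum.cong)
  then show ?thesis by (simp add: sum_supp_lincomb)
qed

lemma harm_lincomb:
  "harm (lincomb R1) (lincomb R2) v = lc_eval R1 (\<lambda>a. lc_eval R2 (\<lambda>b. harm_w a b v))"
proof -
  have "harm (lincomb R1) (lincomb R2) v = (\<Sum>a\<in>supp (lincomb R1). lincomb R1 a *
          (\<Sum>b\<in>supp (lincomb R2). lincomb R2 b * harm_w a b v))"
    unfolding harm_def by (auto simp: sum_distrib_left mult_ac intro!: sum.cong)
  then show ?thesis by (simp add: sum_supp_lincomb)
qed

fun sigma_terms :: "rat poly \<Rightarrow> letter list \<Rightarrow> (rat poly \<times> letter list) list" where
  "sigma_terms s [] = [(1, [])]"
| "sigma_terms s (LX # w) = map (\<lambda>(c, u). (c, LX # u)) (sigma_terms s w)"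
| "sigma_terms s (LY # w) =
     map (\<lambda>(c, u). (s * c, LX # u)) (sigma_terms s w) @ map (\<lambda>(c, u). (c, LY # u)) (sigma_terms s w)"

lemma sigma_eq_lincomb: "sigma s w = lincomb (sigma_terms s w)"
proof (induction s w rule: sigma.induct)
  case (1 s)
  then show ?case by (simp add: wd_eq_lincomb)
next
  case (2 s w)
  show ?case
    by (rule ext) (simp only: sigma.simps 2 wd_eq_lincomb cmul_lincomb, simp add: lincomb_apply)
next
  case (3 s w)
  have "(\<lambda>v. s * wd [LX] v + wd [LY] v) = lincomb [(s, [LX]), (1, [LY])]"
    by (auto simp: wd_def lincomb_def)
  then show ?case
    by (intro ext) (simp only: sigma.simps 3 cmul_lincomb, simp add: lincomb_apply)
qed

lemma lc_eval_sigma_terms_replicate_LX: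
  "lc_eval (sigma_terms s (replicate m LX @ u)) G = lc_eval (sigma_terms s u) (\<lambda>w. G (replicate m LX @ w))"
  by (induction m arbitrary: G) simp_all

lemma lc_eval_sigma_terms_LY:
  "lc_eval (sigma_terms s (LY # u)) G =
     s * lc_eval (sigma_terms s u) (\<lambda>w. G (LX # w)) + lc_eval (sigma_terms s u) (\<lambda>w. G (LY # w))"
  by simp

lemma zpow_0 [simp]: "zpow k 0 = []"
  by (simp add: zpow_def)

lemma zpow_Suc: "zpow k (Suc n) = zk k @ zpow k n"
  by (simp add: zpow_def)

lemma zpow_Suc_right: "zpow k (Suc n) = zpow k n @ zk k"
  by (induction n) (simp_all add: zpow_Suc)

lemma zw_Nil [simp]: "zw [] = []"
  and zw_Cons [simp]: "zw (a # q) = zk a @ zw q"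
  by (simp_all add: zw_def)

lemma zpow_eq_zw: "zpow k i = zw (replicate i k)"
  by (simp add: zpow_def zw_def map_replicate)

lemma zw_add_hd:
  assumes "0 < a"
  shows "zw (add_hd k (a # q)) = replicate k LX @ zw (a # q)"
proof -
  have "replicate (a + k - 1) LX = replicate k LX @ replicate (a - 1) LX"
    using assms by (simp add: replicate_add[symmetric])
  then show ?thesis by (simp add: add_hd_def zk_def)
qed

lemma sum_merges_replicate_Suc_Suc:
  fixes s :: "'a::comm_semiring_1"
  assumes k: "0 < k"
  shows "(\<Sum>q\<leftarrow>merges (replicate (Suc (Suc n)) k). s ^ (Suc (Suc n) - length q) * G (zw q)) =
     s * (\<Sum>q\<leftarrow>merges (replicate (Suc n) k). s ^ (Suc n - length q) * G (replicate k LX @ zw q))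
   + (\<Sum>q\<leftarrow>merges (replicate (Suc n) k). s ^ (Suc n - length q) * G (zk k @ zw q))"
proof -
  let ?M = "merges (replicate (Suc n) k)"
  have "merges (replicate (Suc (Suc n)) k) = map ((#) k) ?M @ map (add_hd k) ?M"
    using merges_Cons_add[of k k "replicate n k"] by simp
  moreover have "s ^ (Suc (Suc n) - length (add_hd k q)) * G (zw (add_hd k q)) =
                 s * (s ^ (Suc n - length q) * G (replicate k LX @ zw q))" if "q \<in> set ?M" for q
  proof -
    have "pos_multiples k q" and sum_q: "(\<Sum>x\<leftarrow>q. x div k) = Suc n"
      using set_merges_replicate[OF k that] by auto
    moreover obtain a q' where q: "q = a # q'"
      using sum_q by (cases q) auto
    ultimately have "0 < a" and "length q \<le> Suc n"
      using length_le_sum_list_div[of k q] by (auto simp: pos_multiples_def)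
    moreover have "length (add_hd k q) = length q"
      by (simp add: q add_hd_def)
    ultimately show ?thesis
      using zw_add_hd[of a k q'] by (simp add: q Suc_diff_le mult.assoc)
  qed
  ultimately show ?thesis
    by (simp add: comp_def sum_list_const_mult add.commute cong: map_cong)
qed

text \<open>The left-hand side pairs \<open>S\<^sub>s(z\<^sub>k\<^sup>n\<^sup>+\<^sup>1)\<close> with \<open>G\<close>, since \<open>z\<^sub>k\<^sup>n\<^sup>+\<^sup>1 = z\<^sub>k\<^sup>n x\<^sup>k\<^sup>-\<^sup>1 y\<close>.\<close>
lemma lc_eval_sigma_terms_zpow:
  assumes k: "0 < k"
  shows "lc_eval (sigma_terms s (zpow k n @ replicate (k - 1) LX)) (\<lambda>a. G (a @ [LY])) =
         (\<Sum>q\<leftarrow>merges (replicate (Suc n) k). s ^ (Suc n - length q) * G (zw q))"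
proof (induction n arbitrary: G)
  case 0
  then show ?case
    using lc_eval_sigma_terms_replicate_LX[of s "k - 1" "[]"] by (simp add: zk_def)
next
  case (Suc n)
  define W where "W = zpow k n @ replicate (k - 1) LX"
  have "zpow k (Suc n) @ replicate (k - 1) LX = replicate (k - 1) LX @ LY # W"
    by (simp add: W_def zpow_Suc zk_def)
  moreover have "replicate (k - 1) LX @ LX # w = replicate k LX @ w" for w
    using k by (cases k) (simp_all add: replicate_app_Cons_same)
  ultimately have "lc_eval (sigma_terms s (zpow k (Suc n) @ replicate (k - 1) LX)) (\<lambda>a. G (a @ [LY])) =
      s * lc_eval (sigma_terms s W) (\<lambda>w. G (replicate k LX @ w @ [LY])) +
      lc_eval (sigma_terms s W) (\<lambda>w. G (zk k @ w @ [LY]))"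
    by (simp only: lc_eval_sigma_terms_replicate_LX lc_eval_sigma_terms_LY append_assoc
        append_Cons zk_def append_Nil)
  also have "\<dots> = (\<Sum>q\<leftarrow>merges (replicate (Suc (Suc n)) k). s ^ (Suc (Suc n) - length q) * G (zw q))"
    unfolding sum_merges_replicate_Suc_Suc[OF k] W_def
    using Suc.IH[of "\<lambda>u. G (replicate k LX @ u)"] Suc.IH[of "\<lambda>u. G (zk k @ u)"] by simp
  finally show ?case .
qed

lemma Sw_zpow:
  assumes k: "0 < k"
  shows "Sw s (zpow k n) = lincomb (map (\<lambda>q. (s ^ (n - length q), zw q)) (merges (replicate n k)))"
proof (cases n)
  case 0
  then show ?thesis by (simp add: Sw_def wd_eq_lincomb)
next
  case (Suc n')
  have z: "zpow k n = (zpow k n' @ replicate (k - 1) LX) @ [LY]"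
    by (simp add: Suc zpow_Suc_right zk_def)
  show ?thesis
  proof
    fix v
    have "Sw s (zpow k n) v =
        lc_eval (sigma_terms s (zpow k n' @ replicate (k - 1) LX)) (\<lambda>a. if a @ [LY] = v then 1 else 0)"
      unfolding Sw_def z by (simp add: sigma_eq_lincomb wd_eq_lincomb cmul_lincomb butlast_append)
    also have "\<dots> = (\<Sum>q\<leftarrow>merges (replicate n k). s ^ (n - length q) * (if zw q = v then 1 else 0))"
      using lc_eval_sigma_terms_zpow[OF k, of s n' "\<lambda>u. if u = v then 1 else 0"] Suc by simp
    also have "\<dots> = lincomb (map (\<lambda>q. (s ^ (n - length q), zw q)) (merges (replicate n k))) v"
      by (simp add: lincomb_apply lc_eval_def comp_def)
    finally show "Sw s (zpow k n) v = \<dots>" .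
  qed
qed

lemma Smap_wd: "Smap s (wd w) = Sw s w"
  by (rule ext) (simp add: Smap_def wd_eq_lincomb lin_lincomb)

lemma toidx_zw:
  assumes "\<forall>x\<in>set q. 0 < x"
  shows "toidx (zw q) = q"
proof -
  have "toidx_aux c (replicate m LX @ w) = toidx_aux (c + m) w" for c m w
    by (induction m arbitrary: c) auto
  with assms show ?thesis
    by (induction q) (simp_all add: toidx_def zk_def)
qed

lemma harm_zpow_Smap_zpow:
  assumes k: "0 < k"
  shows "harm (wd (zpow k i)) (Smap 1 (wd (zpow k j))) v = (\<Sum>m\<leftarrow>stuffle_merges k i j. wd (zw m) v)"
proof -
  have "toidx (zw q) = q" if "q \<in> set (merges (replicate j k))" for q
    using set_merges_replicate(1)[OF k that] by (intro toidx_zw) (auto simp: pos_multiples_def)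
  moreover have "toidx (zpow k i) = replicate i k"
    using k by (simp add: zpow_eq_zw toidx_zw)
  ultimately have "harm_w (zpow k i) (zw q) v = (\<Sum>m\<leftarrow>stuffle (replicate i k) q. wd (zw m) v)"
    if "q \<in> set (merges (replicate j k))" for q
    using that by (simp add: harm_w_def)
  moreover have "Smap 1 (wd (zpow k j)) = lincomb (map (\<lambda>q. (1, zw q)) (merges (replicate j k)))"
    by (simp add: Smap_wd Sw_zpow[OF k])
  ultimately show ?thesis
    by (simp add: wd_eq_lincomb[of "zpow k i"] harm_lincomb lc_eval_def comp_def stuffle_merges_def
        sum_list_map_concat cong: map_cong)
qed

theorem Smap_zpow_eq_harm_sum:
  assumes k: "0 < k"
  shows "Smap tvar (wd (zpow k n)) =
           (\<lambda>v. \<Sum>i\<le>n. (1 - tvar) ^ i * tvar ^ (n - i) *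
                  harm (wd (zpow k i)) (Smap 1 (wd (zpow k (n - i)))) v)"
proof
  fix v
  have "Smap tvar (wd (zpow k n)) v = (\<Sum>q\<leftarrow>merges (replicate n k). tvar ^ (n - length q) * wd (zw q) v)"
    by (simp add: Smap_wd Sw_zpow[OF k] lincomb_apply lc_eval_def comp_def) (simp add: wd_def eq_commute)
  also have "\<dots> = (\<Sum>i\<le>n. (1 - tvar) ^ i * tvar ^ (n - i) * (\<Sum>m\<leftarrow>stuffle_merges k i (n - i). wd (zw m) v))"
    by (rule sum_merges_replicate_eq_stuffle_merges[OF k])
  finally show "Smap tvar (wd (zpow k n)) v = (\<Sum>i\<le>n. (1 - tvar) ^ i * tvar ^ (n - i) *
                  harm (wd (zpow k i)) (Smap 1 (wd (zpow k (n - i)))) v)"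
    by (simp add: harm_zpow_Smap_zpow[OF k])
qed

section \<open>Truncated multiple zeta values\<close>

definition mzv_term :: "nat list \<Rightarrow> nat list \<Rightarrow> real" where
  "mzv_term ks ms = (\<Prod>j<length ks. 1 / real (ms ! j) ^ (ks ! j))"

definition pos_sorted_lists :: "(nat \<Rightarrow> nat \<Rightarrow> bool) \<Rightarrow> nat \<Rightarrow> nat list set" where
  "pos_sorted_lists R n = {ms. length ms = n \<and> sorted_wrt R ms \<and> (\<forall>m\<in>set ms. 0 < m)}"

definition trunc_sum :: "(nat \<Rightarrow> nat \<Rightarrow> bool) \<Rightarrow> nat list \<Rightarrow> nat \<Rightarrow> real" where
  "trunc_sum R ks M = sum (mzv_term ks) {ms \<in> pos_sorted_lists R (length ks). \<forall>m\<in>set ms. m < M}"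

abbreviation mzv_trunc :: "nat list \<Rightarrow> nat \<Rightarrow> real" where
  "mzv_trunc \<equiv> trunc_sum (>)"

abbreviation mzsv_trunc :: "nat list \<Rightarrow> nat \<Rightarrow> real" where
  "mzsv_trunc \<equiv> trunc_sum (\<ge>)"

lemma mzv_eq_infsum: "mzv ks = infsum (mzv_term ks) (pos_sorted_lists (>) (length ks))"
  and mzsv_eq_infsum: "mzsv ks = infsum (mzv_term ks) (pos_sorted_lists (\<ge>) (length ks))"
  by (simp_all add: mzv_def mzsv_def mzv_term_def[abs_def] pos_sorted_lists_def)

lemma mzv_term_Cons: "mzv_term (a # ks) (m # l) = 1 / real m ^ a * mzv_term ks l"
  unfolding mzv_term_def by (simp only: length_Cons prod.lessThan_Suc_shift) simp

lemma finite_bounded_pos_sorted_lists: "finite {ms \<in> pos_sorted_lists R n. \<forall>m\<in>set ms. m < M}"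
  by (rule finite_subset[OF _ finite_lists_length_eq[of "{..<M}" n]]) (auto simp: pos_sorted_lists_def)

lemma trunc_sum_Nil [simp]: "trunc_sum R [] M = 1"
proof -
  have "{ms \<in> pos_sorted_lists R 0. \<forall>m\<in>set ms. m < M} = {[]}"
    by (auto simp: pos_sorted_lists_def)
  then show ?thesis by (simp add: trunc_sum_def mzv_term_def)
qed

lemma trunc_sum_Cons:
  assumes R: "\<And>m y. R m y \<Longrightarrow> y \<le> m"
  shows "trunc_sum R (a # ks) M =
    (\<Sum>m\<in>{1..<M}. sum (mzv_term ks) {l \<in> pos_sorted_lists R (length ks). \<forall>y\<in>set l. R m y} / real m ^ a)"
proof -
  let ?S = "\<lambda>m. {l \<in> pos_sorted_lists R (length ks). \<forall>y\<in>set l. R m y}"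
  have eq: "{ms \<in> pos_sorted_lists R (length (a # ks)). \<forall>m\<in>set ms. m < M} =
        (\<lambda>(m, l). m # l) ` (SIGMA m:{1..<M}. ?S m)"
  proof (intro equalityI subsetI)
    fix ms assume "ms \<in> {ms \<in> pos_sorted_lists R (length (a # ks)). \<forall>m\<in>set ms. m < M}"
    then obtain m l where "ms = m # l" "m \<in> {1..<M}" "l \<in> ?S m"
      by (cases ms) (auto simp: pos_sorted_lists_def Suc_le_eq)
    then show "ms \<in> (\<lambda>(m, l). m # l) ` (SIGMA m:{1..<M}. ?S m)" by auto
  next
    fix ms assume "ms \<in> (\<lambda>(m, l). m # l) ` (SIGMA m:{1..<M}. ?S m)"
    then show "ms \<in> {ms \<in> pos_sorted_lists R (length (a # ks)). \<forall>m\<in>set ms. m < M}"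
      using R by (auto simp: pos_sorted_lists_def) (meson le_less_trans)
  qed
  have inj: "inj_on (\<lambda>(m, l). m # l) (SIGMA m:{1..<M}. ?S m)"
    by (auto simp: inj_on_def)
  have fin: "finite (?S m)" for m
    using R by (intro finite_subset[OF _ finite_bounded_pos_sorted_lists[of R "length ks" "Suc m"]])
      (auto simp: less_Suc_eq_le)
  have "trunc_sum R (a # ks) M = (\<Sum>m\<in>{1..<M}. \<Sum>l\<in>?S m. mzv_term (a # ks) (m # l))"
    unfolding trunc_sum_def eq sum.reindex[OF inj] using fin
    by (subst sum.Sigma) (auto simp: comp_def intro!: sum.cong)
  then show ?thesis
    by (simp add: mzv_term_Cons sum_divide_distrib)
qed

lemma mzv_trunc_Cons: "mzv_trunc (a # ks) M = (\<Sum>m\<in>{1..<M}. mzv_trunc ks m / real m ^ a)"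
  using trunc_sum_Cons[of "(>)" a ks M] by (simp add: trunc_sum_def)

lemma mzsv_trunc_Cons: "mzsv_trunc (a # ks) M = (\<Sum>m\<in>{1..<M}. mzsv_trunc ks (Suc m) / real m ^ a)"
  using trunc_sum_Cons[of "(\<ge>)" a ks M] by (simp add: trunc_sum_def less_Suc_eq_le)

lemma mzv_trunc_Cons_Suc:
  "mzv_trunc (a # ks) (Suc M) = mzv_trunc (a # ks) M + (if M = 0 then 0 else 1 / real M ^ a) * mzv_trunc ks M"
  by (cases M) (simp_all add: mzv_trunc_Cons atLeastLessThanSuc)

lemma mzsv_trunc_Cons_Suc:
  "mzsv_trunc (a # ks) (Suc M) =
     mzsv_trunc (a # ks) M + (if M = 0 then 0 else 1 / real M ^ a) * mzsv_trunc ks (Suc M)"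
  by (cases M) (simp_all add: mzsv_trunc_Cons atLeastLessThanSuc)

lemma sum_list_divide: "(\<Sum>x\<leftarrow>xs. f x) / (c :: 'a::field) = (\<Sum>x\<leftarrow>xs. f x / c)"
  by (induction xs) (auto simp: add_divide_distrib)

lemma sum_sum_list_swap: "(\<Sum>m\<in>A. \<Sum>x\<leftarrow>xs. f m x) = (\<Sum>x\<leftarrow>xs. \<Sum>m\<in>A. f m x)"
  by (induction xs) (auto simp: sum.distrib)

text \<open>Induction on \<open>M\<close>: the new terms have top index \<open>M\<close>, which is the top index of the
  first factor, of the second, or of both.\<close>
lemma mzv_trunc_mult: "mzv_trunc u M * mzv_trunc v M = (\<Sum>w\<leftarrow>stuffle u v. mzv_trunc w M)"
proof (induction M arbitrary: u v)
  case 0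
  then show ?case by (cases u; cases v) (simp_all add: mzv_trunc_Cons comp_def)
next
  case (Suc M)
  consider "u = []" | "v = []" | a x b y where "u = a # x" "v = b # y"
    by (meson list.exhaust)
  then show ?case
  proof cases
    case 3
    define \<omega> where "\<omega> c = (if M = 0 then 0 else 1 / real M ^ c)" for c
    have "(\<Sum>w\<leftarrow>stuffle u v. mzv_trunc w (Suc M)) =
          (\<Sum>w\<leftarrow>stuffle u v. mzv_trunc w M) + \<omega> a * (\<Sum>w\<leftarrow>stuffle x v. mzv_trunc w M)
        + \<omega> b * (\<Sum>w\<leftarrow>stuffle u y. mzv_trunc w M) + \<omega> (a + b) * (\<Sum>w\<leftarrow>stuffle x y. mzv_trunc w M)"
      using 3 by (simp add: comp_def mzv_trunc_Cons_Suc sum_list_addf sum_list_const_mult \<omega>_def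
          sum_list_divide algebra_simps)
    also have "\<dots> = (mzv_trunc u M + \<omega> a * mzv_trunc x M) * (mzv_trunc v M + \<omega> b * mzv_trunc y M)"
      by (simp add: Suc.IH[symmetric] \<omega>_def power_add algebra_simps)
    also have "\<dots> = mzv_trunc u (Suc M) * mzv_trunc v (Suc M)"
      using 3 by (simp add: mzv_trunc_Cons_Suc \<omega>_def)
    finally show ?thesis ..
  qed simp_all
qed

lemma mzsv_trunc_eq_sum_merges: "mzsv_trunc l M = (\<Sum>q\<leftarrow>merges l. mzv_trunc q M)"
proof (induction l arbitrary: M rule: merges.induct)
  case (3 a b r)
  have "mzsv_trunc (a # b # r) M =
        (\<Sum>m\<in>{1..<M}. mzsv_trunc (b # r) m / real m ^ a + mzsv_trunc r (Suc m) / real m ^ (a + b))"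
    unfolding mzsv_trunc_Cons[of a]
    by (intro sum.cong refl) (auto simp: mzsv_trunc_Cons_Suc power_add field_simps)
  also have "\<dots> = (\<Sum>q\<leftarrow>merges (b # r). mzv_trunc (a # q) M) + mzsv_trunc ((a + b) # r) M"
    by (simp add: sum.distrib mzsv_trunc_Cons[of "a + b"] "3.IH"(1) sum_list_divide sum_sum_list_swap
        mzv_trunc_Cons)
  finally show ?case
    by (simp add: "3.IH"(2) comp_def)
qed (simp_all add: mzsv_trunc_Cons mzv_trunc_Cons)

lemma sum_inverse_squares_le: "1 \<le> N \<Longrightarrow> (\<Sum>m\<in>{1..N}. 1 / real m ^ 2) \<le> 2 - 1 / real N"
proof (induction N rule: dec_induct)
  case (step N)
  have "1 / real (Suc N) ^ 2 \<le> 1 / (real N * real (Suc N))"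
    using step.hyps by (intro divide_left_mono) (auto simp: power2_eq_square)
  also have "\<dots> = 1 / real N - 1 / real (Suc N)"
    using step.hyps by (simp add: field_simps)
  finally show ?case using step.IH by simp
qed simp

lemma sum_inverse_powers_le_2:
  assumes "2 \<le> a"
  shows "(\<Sum>m\<in>{1..<M}. 1 / real m ^ a) \<le> 2"
proof -
  have "(\<Sum>m\<in>{1..<M}. 1 / real m ^ a) \<le> (\<Sum>m\<in>{1..<M}. 1 / real m ^ 2)"
    using assms by (intro sum_mono divide_left_mono power_increasing) auto
  also have "\<dots> \<le> (\<Sum>m\<in>{1..M}. 1 / real m ^ 2)"
    by (intro sum_mono2) auto
  also have "\<dots> \<le> 2"
    using sum_inverse_squares_le[of M] by (cases "M = 0") (auto simp: not_less_eq_eq intro: order_trans)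
  finally show ?thesis .
qed

lemma mzv_term_nonneg: "0 \<le> mzv_term ks ms"
  by (simp add: mzv_term_def prod_nonneg)

lemma trunc_sum_le:
  assumes R: "\<And>m y. R m y \<Longrightarrow> y \<le> m" and ks: "\<forall>x\<in>set ks. 2 \<le> x"
  shows "trunc_sum R ks M \<le> 2 ^ length ks"
  using ks
proof (induction ks arbitrary: M)
  case (Cons a ks)
  have "sum (mzv_term ks) {l \<in> pos_sorted_lists R (length ks). \<forall>y\<in>set l. R m y} \<le> trunc_sum R ks (Suc m)"
    for m
    unfolding trunc_sum_def using R
    by (intro sum_mono2 finite_bounded_pos_sorted_lists) (auto simp: mzv_term_nonneg less_Suc_eq_le)
  with Cons have "sum (mzv_term ks) {l \<in> pos_sorted_lists R (length ks). \<forall>y\<in>set l. R m y} \<le> 2 ^ length ks"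
    for m
    by (meson order_trans set_subset_Cons subsetD)
  then have "trunc_sum R (a # ks) M \<le> (\<Sum>m\<in>{1..<M}. 2 ^ length ks / real m ^ a)"
    by (subst trunc_sum_Cons[OF R]) (auto intro!: sum_mono divide_right_mono)
  also have "\<dots> = 2 ^ length ks * (\<Sum>m\<in>{1..<M}. 1 / real m ^ a)"
    by (simp add: sum_distrib_left)
  also have "\<dots> \<le> 2 ^ length ks * 2"
    using Cons.prems sum_inverse_powers_le_2[of a M] by simp
  finally show ?case by simp
qed simp

lemma finite_subset_incseq:
  assumes "incseq F" and "finite X" and "X \<subseteq> (\<Union>M. F M)"
  shows "\<exists>M. X \<subseteq> F M"
  using assms(2,3)
proof (induction X rule: finite_induct)
  case (insert x X)
  then obtain M1 M2 where "X \<subseteq> F M1" "x \<in> F M2"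
    by blast
  then have "insert x X \<subseteq> F (max M1 M2)"
    using monoD[OF assms(1), of M1 "max M1 M2"] monoD[OF assms(1), of M2 "max M1 M2"] by auto
  then show ?case by blast
qed simp

lemma tendsto_sum_exhaustion_infsum:
  fixes f :: "'a \<Rightarrow> real" and F :: "nat \<Rightarrow> 'a set"
  assumes nonneg: "\<And>x. x \<in> D \<Longrightarrow> 0 \<le> f x" and sub: "\<And>M. F M \<subseteq> D"
    and fin: "\<And>M. finite (F M)" and mono: "incseq F" and cover: "\<And>x. x \<in> D \<Longrightarrow> \<exists>M. x \<in> F M"
    and bound: "\<And>M. sum f (F M) \<le> B"
  shows "(\<lambda>M. sum f (F M)) \<longlonglongrightarrow> infsum f D"
proof -
  have finite_cover: "\<exists>M. X \<subseteq> F M" if "finite X" "X \<subseteq> D" for X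
    using finite_subset_incseq[OF mono that(1)] that(2) cover by blast
  have "f summable_on D"
  proof (rule nonneg_bdd_above_summable_on)
    show "bdd_above (sum f ` {G. G \<subseteq> D \<and> finite G})"
    proof (rule bdd_aboveI)
      fix y assume "y \<in> sum f ` {G. G \<subseteq> D \<and> finite G}"
      then obtain G M where "y = sum f G" "G \<subseteq> F M"
        using finite_cover by blast
      moreover have "sum f G \<le> sum f (F M)"
        using \<open>G \<subseteq> F M\<close> sub nonneg by (intro sum_mono2[OF fin]) blast+
      ultimately show "y \<le> B"
        using bound[of M] by simp
    qed
  qed (use nonneg in blast)
  then have "(sum f \<longlongrightarrow> infsum f D) (finite_subsets_at_top D)"
    using has_sum_infsum has_sum_def by blast
  moreover have "filterlim F (finite_subsets_at_top D) sequentially"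
    unfolding filterlim_finite_subsets_at_top eventually_sequentially
  proof (intro allI impI)
    fix X assume "finite X \<and> X \<subseteq> D"
    then obtain M where "X \<subseteq> F M"
      using finite_cover by blast
    then show "\<exists>N. \<forall>n\<ge>N. finite (F n) \<and> X \<subseteq> F n \<and> F n \<subseteq> D"
      using fin sub monoD[OF mono] by blast
  qed
  ultimately show ?thesis by (rule filterlim_compose)
qed

lemma trunc_sum_tendsto:
  assumes R: "\<And>m y. R m y \<Longrightarrow> y \<le> m" and ks: "\<forall>x\<in>set ks. 2 \<le> x"
  shows "trunc_sum R ks \<longlonglongrightarrow> infsum (mzv_term ks) (pos_sorted_lists R (length ks))"
  unfolding trunc_sum_def
proof (rule tendsto_sum_exhaustion_infsum)
  show "\<exists>M. ms \<in> {ms \<in> pos_sorted_lists R (length ks). \<forall>m\<in>set ms. m < M}"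
    if "ms \<in> pos_sorted_lists R (length ks)" for ms
    using that by (intro exI[of _ "Suc (sum_list ms)"]) (auto simp: le_imp_less_Suc member_le_sum_list)
  show "sum (mzv_term ks) {ms \<in> pos_sorted_lists R (length ks). \<forall>m\<in>set ms. m < M} \<le> 2 ^ length ks"
    for M
    using trunc_sum_le[OF R ks] by (simp add: trunc_sum_def)
qed (auto simp: mzv_term_nonneg finite_bounded_pos_sorted_lists incseq_def)

lemma mzv_trunc_tendsto: "\<forall>x\<in>set ks. 2 \<le> x \<Longrightarrow> mzv_trunc ks \<longlonglongrightarrow> mzv ks"
  and mzsv_trunc_tendsto: "\<forall>x\<in>set ks. 2 \<le> x \<Longrightarrow> mzsv_trunc ks \<longlonglongrightarrow> mzsv ks"
  using trunc_sum_tendsto[of "(>)" ks] trunc_sum_tendsto[of "(\<ge>)" ks]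
  by (simp_all add: mzv_eq_infsum mzsv_eq_infsum)

section \<open>The identity for \<open>\<zeta>\<^sup>t\<close>\<close>

lemma sum_stuffle_merges_mzv_trunc:
  "(\<Sum>m\<leftarrow>stuffle_merges k i j. mzv_trunc m M) = mzv_trunc (replicate i k) M * mzsv_trunc (replicate j k) M"
  by (simp add: stuffle_merges_def sum_list_map_concat mzv_trunc_mult[symmetric] mzsv_trunc_eq_sum_merges
      sum_list_const_mult comp_def)

lemma sum_list_const_poly: "(\<Sum>x\<leftarrow>xs. [:f x:]) = [:\<Sum>x\<leftarrow>xs. f x:]"
  by (induction xs) simp_all

lemma sum_merges_monom_mzv_trunc:
  assumes k: "0 < k"
  shows "(\<Sum>q\<leftarrow>merges (replicate n k). monom (mzv_trunc q M) (n - length q)) =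
    (\<Sum>i\<le>n. smult (mzv_trunc (replicate i k) M * mzsv_trunc (replicate (n - i) k) M)
                  ([:1, -1:] ^ i * [:0, 1:] ^ (n - i)))"
proof -
  have "1 - [:0, 1:] = ([:1, -1:] :: real poly)"
    by (simp add: one_pCons)
  moreover have "monom c e = [:0, 1:] ^ e * [:c:]" for c :: real and e
    by (simp add: monom_altdef mult.commute)
  ultimately show ?thesis
    using sum_merges_replicate_eq_stuffle_merges[OF k, of "[:0, 1:]" n "\<lambda>q. [:mzv_trunc q M:]"]
    by (simp add: sum_list_const_poly sum_stuffle_merges_mzv_trunc mult.commute)
qed

lemma tendsto_coeff_sum_list:
  fixes p :: "'a \<Rightarrow> nat \<Rightarrow> real poly"
  assumes "\<And>x. x \<in> set xs \<Longrightarrow> (\<lambda>M. coeff (p x M) d) \<longlonglongrightarrow> coeff (P x) d"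
  shows "(\<lambda>M. coeff (\<Sum>x\<leftarrow>xs. p x M) d) \<longlonglongrightarrow> coeff (\<Sum>x\<leftarrow>xs. P x) d"
  using assms by (induction xs) (auto intro!: tendsto_add)

theorem mzv_t_replicate:
  assumes k: "2 \<le> k"
  shows "mzv_t (replicate n k) =
           (\<Sum>i\<le>n. smult (mzv (replicate i k) * mzsv (replicate (n - i) k))
                        ([:1, -1:] ^ i * [:0, 1:] ^ (n - i)))"
    (is "_ = ?R")
proof (rule poly_eqI)
  fix d
  have "\<forall>x\<in>set q. 2 \<le> x" if "q \<in> set (merges (replicate n k))" for q
    using set_merges_replicate(1)[OF _ that] k
    by (auto simp: pos_multiples_def intro: order_trans dvd_imp_le)
  then have "(\<lambda>M. coeff (\<Sum>q\<leftarrow>merges (replicate n k). monom (mzv_trunc q M) (n - length q)) d)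
               \<longlonglongrightarrow> coeff (mzv_t (replicate n k)) d"
    unfolding mzv_t_def length_replicate
    by (intro tendsto_coeff_sum_list) (auto simp: coeff_monom intro: mzv_trunc_tendsto)
  moreover have "(\<lambda>M. coeff (\<Sum>i\<le>n. smult (mzv_trunc (replicate i k) M * mzsv_trunc (replicate (n - i) k) M)
                                  ([:1, -1:] ^ i * [:0, 1:] ^ (n - i))) d) \<longlonglongrightarrow> coeff ?R d"
    using k by (auto simp: coeff_sum intro!: tendsto_sum tendsto_mult_right tendsto_mult
        mzv_trunc_tendsto mzsv_trunc_tendsto)
  ultimately show "coeff (mzv_t (replicate n k)) d = coeff ?R d"
    using k by (simp add: sum_merges_monom_mzv_trunc LIMSEQ_unique)
qed

theorem proposition4p5:
  fixes k n :: nat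
  assumes "1 \<le> k" and "1 \<le> n"
  shows "Smap tvar (wd (zpow k n)) =
           (\<lambda>v. \<Sum>i\<le>n. (1 - tvar) ^ i * tvar ^ (n - i) *
                  harm (wd (zpow k i)) (Smap 1 (wd (zpow k (n - i)))) v)
         \<and> (2 \<le> k \<longrightarrow>
           mzv_t (replicate n k) =
           (\<Sum>i\<le>n. smult (mzv (replicate i k) * mzsv (replicate (n - i) k))
                        ([:1, -1:] ^ i * [:0, 1:] ^ (n - i))))"
  using assms(1) Smap_zpow_eq_harm_sum mzv_t_replicate by simp

end
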